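(* Let $G$ be a connected outerplanar graph given with an outerplanar (all vertices on the outer face) planar embedding, and let a new edge $(p,q)$ between two existing vertices arrive in the ordered streaming model, i.e., together with its position in the clockwise order of edges around $p$ and around $q$, such that the resulting graph is outerplanar. If at least one of $p,q$ has degree greater than $1$ in $G$, then this information about the relative order of incident edges determines the embedding of the new edge uniquely: there is only one way to draw $(p,q)$ consistent with the given edge orders so that the resulting drawing is planar with all vertices on the outer face.
   Context: A graph is outerplanar if it has a planar drawing in which every vertex lies on the outer face. In the ordered streaming model, each new edge comes with its position in the clockwise cyclic order of edges incident to each of its endpoints. *)

theory Defs
  imports Main
begin

definition simple_graph :: "'v set \<Rightarrow> 'v set set \<Rightarrow> bool" where
  "simple_graph V E \<longleftrightarrow> finite V \<and>
     (\<forall>e\<in>E. \<exists>u v. e = {u, v} \<and> u \<noteq> v \<and> u \<in> V \<and> v \<in> V)"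

definition nbrs :: "'v set set \<Rightarrow> 'v \<Rightarrow> 'v set" where
  "nbrs E u = {v. {u, v} \<in> E}"

definition degree :: "'v set set \<Rightarrow> 'v \<Rightarrow> nat" where
  "degree E u = card (nbrs E u)"

definition connected_graph :: "'v set \<Rightarrow> 'v set set \<Rightarrow> bool" where
  "connected_graph V E \<longleftrightarrow>
     (\<forall>u\<in>V. \<forall>v\<in>V. (u, v) \<in> {(x, y). {x, y} \<in> E}\<^sup>*)"

definition darts :: "'v set set \<Rightarrow> ('v \<times> 'v) set" where
  "darts E = {(u, v). {u, v} \<in> E}"

text \<open>Combinatorial embedding (rotation system): \<open>\<rho> u v\<close> is the neighbour of \<open>u\<close>
  following \<open>v\<close> in the clockwise cyclic order of edges around \<open>u\<close>; \<open>\<rho> u\<close> is a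
  cyclic permutation (a single cycle) of the neighbourhood of \<open>u\<close>.\<close>
definition rotation_system :: "'v set \<Rightarrow> 'v set set \<Rightarrow> ('v \<Rightarrow> 'v \<Rightarrow> 'v) \<Rightarrow> bool" where
  "rotation_system V E \<rho> \<longleftrightarrow>
     (\<forall>u\<in>V. bij_betw (\<rho> u) (nbrs E u) (nbrs E u) \<and>
        (\<forall>v\<in>nbrs E u. \<forall>w\<in>nbrs E u. \<exists>k. (\<rho> u ^^ k) v = w))"

definition face_succ :: "('v \<Rightarrow> 'v \<Rightarrow> 'v) \<Rightarrow> 'v \<times> 'v \<Rightarrow> 'v \<times> 'v" where
  "face_succ \<rho> d = (snd d, \<rho> (snd d) (fst d))"

definition faces :: "'v set set \<Rightarrow> ('v \<Rightarrow> 'v \<Rightarrow> 'v) \<Rightarrow> ('v \<times> 'v) set set" where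
  "faces E \<rho> = {{(face_succ \<rho> ^^ k) d | k. True} | d. d \<in> darts E}"

text \<open>A plane embedding of a connected graph: a rotation system of genus 0
  (Euler's formula V - E + F = 2) together with a choice of outer face.\<close>
definition plane_embedding ::
  "'v set \<Rightarrow> 'v set set \<Rightarrow> ('v \<Rightarrow> 'v \<Rightarrow> 'v) \<Rightarrow> ('v \<times> 'v) set \<Rightarrow> bool" where
  "plane_embedding V E \<rho> OF \<longleftrightarrow> rotation_system V E \<rho> \<and>
     int (card V) - int (card E) + int (card (faces E \<rho>)) = 2 \<and> OF \<in> faces E \<rho>"

definition outerplanar_embedding ::
  "'v set \<Rightarrow> 'v set set \<Rightarrow> ('v \<Rightarrow> 'v \<Rightarrow> 'v) \<Rightarrow> ('v \<times> 'v) set \<Rightarrow> bool" where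
  "outerplanar_embedding V E \<rho> OF \<longleftrightarrow> plane_embedding V E \<rho> OF \<and> fst ` OF = V"

definition outerplanar :: "'v set \<Rightarrow> 'v set set \<Rightarrow> bool" where
  "outerplanar V E \<longleftrightarrow> (\<exists>\<rho> OF. outerplanar_embedding V E \<rho> OF)"

text \<open>Ordered-streaming consistency: the embedding \<open>(\<rho>', O')\<close> of \<open>G + pq\<close> is outerplanar,
  the new edge \<open>pq\<close> is placed immediately after edge \<open>pa\<close> clockwise around \<open>p\<close> and
  immediately after edge \<open>qb\<close> clockwise around \<open>q\<close>, and deleting \<open>pq\<close> from the rotation
  system \<open>\<rho>'\<close> gives back the given rotation system \<open>\<rho>\<close> of \<open>G\<close>.\<close>
definition consistent_extension ::
  "'v set \<Rightarrow> 'v set set \<Rightarrow> ('v \<Rightarrow> 'v \<Rightarrow> 'v) \<Rightarrow> 'v \<Rightarrow> 'v \<Rightarrow> 'v \<Rightarrow> 'v \<Rightarrow>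
   ('v \<Rightarrow> 'v \<Rightarrow> 'v) \<Rightarrow> ('v \<times> 'v) set \<Rightarrow> bool" where
  "consistent_extension V E \<rho> p q a b \<rho>' O' \<longleftrightarrow>
     outerplanar_embedding V (insert {p, q} E) \<rho>' O' \<and>
     \<rho>' p a = q \<and> \<rho>' q b = p \<and>
     (\<forall>u\<in>V. \<forall>v\<in>nbrs E u.
        \<rho> u v = (if (u = p \<and> \<rho>' u v = q) \<or> (u = q \<and> \<rho>' u v = p)
                 then \<rho>' u (\<rho>' u v) else \<rho>' u v))"

end

theory Submission
  imports Defs "HOL-Combinatorics.Orbits"
begin

text \<open>Adding \<open>pq\<close> gives \<open>p\<close> or \<open>q\<close> degree at least 3. The consistency conditions force the
  rotation of every dart of \<open>G + pq\<close>, so two consistent extensions have the same faces and can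
  differ only in the choice of the outer face. But in a connected plane graph with a vertex of
  degree at least 3 at most one face passes through all vertices: every face has at least 3
  darts, so by Euler's formula two such faces would each pass through every vertex exactly once
  and together contain all darts, leaving every vertex with at most two incident edges.\<close>

lemma simple_graph_edgeE:
  assumes "simple_graph V E" "e \<in> E"
  obtains u v where "e = {u, v}" "u \<noteq> v" "u \<in> V" "v \<in> V"
  using assms unfolding simple_graph_def by blast

lemma simple_graph_insert_edge:
  "simple_graph V E \<Longrightarrow> p \<in> V \<Longrightarrow> q \<in> V \<Longrightarrow> p \<noteq> q \<Longrightarrow> simple_graph V (insert {p, q} E)"
  unfolding simple_graph_def by blast

lemma in_darts_iff_nbrs: "(u, v) \<in> darts E \<longleftrightarrow> v \<in> nbrs E u"
  by (simp add: darts_def nbrs_def)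

lemma nbrs_sym: "v \<in> nbrs E u \<longleftrightarrow> u \<in> nbrs E v"
  by (simp add: nbrs_def insert_commute)

lemma darts_subset: "simple_graph V E \<Longrightarrow> darts E \<subseteq> V \<times> V"
  unfolding simple_graph_def darts_def by (auto simp: doubleton_eq_iff)

lemma darts_irrefl:
  assumes "simple_graph V E" "(u, v) \<in> darts E"
  shows "u \<noteq> v"
proof -
  have "{u, v} \<in> E" using assms(2) by (simp add: darts_def)
  then obtain x y where "{u, v} = {x, y}" "x \<noteq> y"
    using simple_graph_edgeE[OF assms(1)] by metis
  then show ?thesis by (auto simp: doubleton_eq_iff)
qed

lemma finite_darts: "simple_graph V E \<Longrightarrow> finite (darts E)"
  by (rule finite_subset[OF darts_subset]) (auto simp: simple_graph_def)

lemma finite_edges: "simple_graph V E \<Longrightarrow> finite E"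
proof -
  assume sg: "simple_graph V E"
  then have "E \<subseteq> Pow V" by (fastforce elim: simple_graph_edgeE)
  then show "finite E" using sg unfolding simple_graph_def by (meson finite_Pow_iff finite_subset)
qed

lemma finite_nbrs: "simple_graph V E \<Longrightarrow> finite (nbrs E u)"
proof -
  assume "simple_graph V E"
  moreover have "nbrs E u \<subseteq> snd ` darts E"
    by (force simp: in_darts_iff_nbrs[symmetric])
  ultimately show ?thesis by (meson finite_darts finite_imageI finite_subset)
qed

lemma card_darts:
  assumes "simple_graph V E"
  shows "card (darts E) = 2 * card E"
proof -
  have darts_UN: "darts E = (\<Union>e\<in>E. {(x, y). {x, y} = e})"
    unfolding darts_def by blast
  have "card {(x, y). {x, y} = e} = 2" if e: "e \<in> E" for e
  proof -
    obtain u v where "e = {u, v}" "u \<noteq> v"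
      using simple_graph_edgeE[OF assms e] by blast
    moreover have "{(x, y). {x, y} = {u, v}} = {(u, v), (v, u)}"
      by (auto simp: doubleton_eq_iff)
    ultimately show ?thesis by simp
  qed
  moreover have "finite {(x, y). {x, y} = e}" if "e \<in> E" for e
    using calculation[OF that] by (intro card_ge_0_finite) simp
  ultimately have "card (darts E) = (\<Sum>e\<in>E. 2)"
    unfolding darts_UN using finite_edges[OF assms]
    by (subst card_UN_disjoint) auto
  then show ?thesis by simp
qed

lemma nbrs_insert_edge: "nbrs (insert {p, q} E) p = insert q (nbrs E p)"
  by (auto simp: nbrs_def doubleton_eq_iff)

lemma degree_insert_edge:
  assumes "simple_graph V E" "{p, q} \<notin> E"
  shows "degree (insert {p, q} E) p = Suc (degree E p)"
proof -
  have "q \<notin> nbrs E p" using assms(2) by (simp add: nbrs_def)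
  then show ?thesis
    unfolding degree_def nbrs_insert_edge using finite_nbrs[OF assms(1)] by simp
qed

lemma connected_graph_mono:
  assumes "connected_graph V E" "E \<subseteq> E'"
  shows "connected_graph V E'"
proof -
  have "{(x, y). {x, y} \<in> E} \<subseteq> {(x, y). {x, y} \<in> E'}" using assms(2) by blast
  then show ?thesis using assms(1) unfolding connected_graph_def by (meson rtrancl_mono subsetD)
qed

lemma rotation_system_bij:
  "rotation_system V E \<rho> \<Longrightarrow> u \<in> V \<Longrightarrow> bij_betw (\<rho> u) (nbrs E u) (nbrs E u)"
  unfolding rotation_system_def by blast

lemma rotation_system_cyclic:
  "rotation_system V E \<rho> \<Longrightarrow> u \<in> V \<Longrightarrow> v \<in> nbrs E u \<Longrightarrow> w \<in> nbrs E u \<Longrightarrow>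
    \<exists>k. (\<rho> u ^^ k) v = w"
  unfolding rotation_system_def by blast

text \<open>Extended by the identity off the darts, \<open>face_succ\<close> becomes a permutation in the sense of
  \<open>permutes\<close>, so that the orbit theory of permutations applies to faces.\<close>
definition face_perm :: "'v set set \<Rightarrow> ('v \<Rightarrow> 'v \<Rightarrow> 'v) \<Rightarrow> 'v \<times> 'v \<Rightarrow> 'v \<times> 'v" where
  "face_perm E \<rho> d = (if d \<in> darts E then face_succ \<rho> d else d)"

context
  fixes V :: "'v set" and E :: "'v set set" and \<rho> :: "'v \<Rightarrow> 'v \<Rightarrow> 'v"
  assumes sg: "simple_graph V E" and rs: "rotation_system V E \<rho>"
begin

lemma face_succ_in_darts: "d \<in> darts E \<Longrightarrow> face_succ \<rho> d \<in> darts E"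
proof -
  assume d: "d \<in> darts E"
  obtain u v where uv: "d = (u, v)" by fastforce
  have "v \<in> V" using d uv darts_subset[OF sg] by blast
  moreover have "u \<in> nbrs E v" using d uv by (simp add: in_darts_iff_nbrs nbrs_sym)
  ultimately have "\<rho> v u \<in> nbrs E v"
    using rotation_system_bij[OF rs] by (meson bij_betwE)
  then show ?thesis by (simp add: uv face_succ_def in_darts_iff_nbrs)
qed

lemma inj_on_face_succ: "inj_on (face_succ \<rho>) (darts E)"
proof (rule inj_onI)
  fix d d' assume d: "d \<in> darts E" and d': "d' \<in> darts E"
    and eq: "face_succ \<rho> d = face_succ \<rho> d'"
  obtain u v u' v' where uv: "d = (u, v)" "d' = (u', v')" by fastforce
  have "v' = v" and "\<rho> v u = \<rho> v u'" using eq uv by (auto simp: face_succ_def)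
  moreover have "v \<in> V" using d uv darts_subset[OF sg] by blast
  moreover have "u \<in> nbrs E v" "u' \<in> nbrs E v"
    using d d' uv \<open>v' = v\<close> by (simp_all add: in_darts_iff_nbrs nbrs_sym)
  ultimately show "d = d'"
    using uv rotation_system_bij[OF rs] by (metis bij_betw_imp_inj_on inj_onD)
qed

lemma face_perm_permutes: "face_perm E \<rho> permutes darts E"
  by (rule inj_imp_permutes)
    (auto simp: face_perm_def finite_darts[OF sg] face_succ_in_darts
      intro: inj_on_cong[THEN iffD1, OF _ inj_on_face_succ])

lemma permutation_face_perm: "permutation (face_perm E \<rho>)"
  using face_perm_permutes finite_darts[OF sg] by (rule permutes_imp_permutation[rotated])

lemma funpow_face_perm:
  assumes "d \<in> darts E"
  shows "(face_perm E \<rho> ^^ k) d = (face_succ \<rho> ^^ k) d"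
proof (induction k)
  case (Suc k)
  have "(face_succ \<rho> ^^ k) d \<in> darts E"
    using Suc permutes_in_funpow_image[OF face_perm_permutes assms] by metis
  with Suc show ?case by (simp add: face_perm_def)
qed simp

lemma faces_eq_orbits: "faces E \<rho> = orbit (face_perm E \<rho>) ` darts E"
proof -
  have "orbit (face_perm E \<rho>) d = {(face_succ \<rho> ^^ k) d | k. True}" if "d \<in> darts E" for d
    unfolding orbit_altdef_permutation[OF permutation_face_perm] funpow_face_perm[OF that] by blast
  then show ?thesis unfolding faces_def by (auto simp: image_def)
qed

lemma faces_subset_darts: "f \<in> faces E \<rho> \<Longrightarrow> f \<subseteq> darts E"
  unfolding faces_eq_orbits using permutes_orbit_subset[OF face_perm_permutes] by blast

lemma finite_faces: "finite (faces E \<rho>)"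
  unfolding faces_eq_orbits using finite_darts[OF sg] by blast

lemma finite_face: "f \<in> faces E \<rho> \<Longrightarrow> finite f"
  using faces_subset_darts finite_darts[OF sg] finite_subset by blast

lemma face_eq_orbit: "f \<in> faces E \<rho> \<Longrightarrow> x \<in> f \<Longrightarrow> f = orbit (face_perm E \<rho>) x"
proof -
  assume "f \<in> faces E \<rho>" "x \<in> f"
  then obtain d where "f = orbit (face_perm E \<rho>) d" unfolding faces_eq_orbits by blast
  moreover have "cyclic_on (face_perm E \<rho>) (orbit (face_perm E \<rho>) d)"
    by (rule cyclic_on_orbit[OF face_perm_permutes finite_darts[OF sg]])
  ultimately show ?thesis using \<open>x \<in> f\<close> orbit_cyclic_eq3 by metis
qed

lemma faces_disjoint:
  "f \<in> faces E \<rho> \<Longrightarrow> f' \<in> faces E \<rho> \<Longrightarrow> f \<noteq> f' \<Longrightarrow> f \<inter> f' = {}"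
  using face_eq_orbit by blast

lemma Union_faces: "\<Union>(faces E \<rho>) = darts E"
proof
  show "\<Union>(faces E \<rho>) \<subseteq> darts E" using faces_subset_darts by blast
  have "d \<in> orbit (face_perm E \<rho>) d" for d by (rule permutation_self_in_orbit[OF permutation_face_perm])
  then show "darts E \<subseteq> \<Union>(faces E \<rho>)" unfolding faces_eq_orbits by blast
qed

lemma short_face_succ_involutive:
  assumes d: "d \<in> darts E" and short: "card {(face_succ \<rho> ^^ k) d | k. True} \<le> 2"
  shows "face_succ \<rho> (face_succ \<rho> d) = d"
proof (rule ccontr)
  let ?s = "face_succ \<rho>" and ?f = "{(face_succ \<rho> ^^ k) d | k. True}"
  assume "?s (?s d) \<noteq> d"
  moreover have "d \<noteq> ?s d"
    using d darts_irrefl[OF sg] by (cases d) (simp add: face_succ_def)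
  moreover from this have "?s d \<noteq> ?s (?s d)"
    using d face_succ_in_darts inj_on_face_succ by (metis inj_onD)
  ultimately have "card {d, ?s d, ?s (?s d)} = 3" by simp
  have "(?s ^^ k) d \<in> ?f" for k by blast
  from this[of 0] this[of 1] this[of 2] have "{d, ?s d, ?s (?s d)} \<subseteq> ?f"
    by (simp add: numeral_2_eq_2)
  moreover have "?f \<in> faces E \<rho>" using d unfolding faces_def by blast
  ultimately have "card {d, ?s d, ?s (?s d)} \<le> card ?f" by (intro card_mono finite_face)
  with \<open>card {d, ?s d, ?s (?s d)} = 3\<close> short show False by simp
qed

lemma sum_card_faces: "(\<Sum>f\<in>faces E \<rho>. card f) = 2 * card E"
proof -
  have "(\<Sum>f\<in>faces E \<rho>. card f) = card (\<Union>(faces E \<rho>))"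
    by (rule card_Union_disjoint[symmetric])
      (auto simp: pairwise_def disjnt_def faces_disjoint finite_face)
  then show ?thesis by (simp add: Union_faces card_darts[OF sg])
qed

end

lemma faces_cong:
  assumes sg: "simple_graph V E" and rs: "rotation_system V E \<rho>" and rs': "rotation_system V E \<rho>'"
    and agree: "\<forall>u\<in>V. \<forall>v\<in>nbrs E u. \<rho> u v = \<rho>' u v"
  shows "faces E \<rho> = faces E \<rho>'"
proof -
  have "face_succ \<rho> (u, v) = face_succ \<rho>' (u, v)" if uv: "(u, v) \<in> darts E" for u v
  proof -
    have "v \<in> V" using uv darts_subset[OF sg] by blast
    moreover have "u \<in> nbrs E v" using uv by (simp add: in_darts_iff_nbrs nbrs_sym)
    ultimately show ?thesis using agree by (simp add: face_succ_def)
  qed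
  then have "face_perm E \<rho> = face_perm E \<rho>'" by (auto simp: face_perm_def)
  then show ?thesis using faces_eq_orbits[OF sg rs] faces_eq_orbits[OF sg rs'] by simp
qed

lemma rotation_fixpoint_imp_nbrs_singleton:
  assumes rs: "rotation_system V E \<rho>" and "u \<in> V" "v \<in> nbrs E u" "\<rho> u v = v"
  shows "nbrs E u = {v}"
proof -
  have "(\<rho> u ^^ k) v = v" for k using assms(4) by (induction k) auto
  then show ?thesis using rotation_system_cyclic[OF rs assms(2,3)] assms(3) by blast
qed

lemma connected_graph_single_edge:
  assumes "connected_graph V E" "u \<in> V" "nbrs E u = {v}" "nbrs E v = {u}"
  shows "V \<subseteq> {u, v}"
proof
  fix x assume "x \<in> V"
  with assms(1,2) have "(u, x) \<in> {(x, y). {x, y} \<in> E}\<^sup>*" unfolding connected_graph_def by blast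
  then show "x \<in> {u, v}"
  proof (induction rule: rtrancl_induct)
    case (step y z)
    then have "z \<in> nbrs E y" by (simp add: nbrs_def)
    with step.IH assms(3,4) show ?case by auto
  qed simp
qed

text \<open>A face with at most two darts traverses a single edge back and forth, which then forms a
  whole component.\<close>
lemma card_face_ge_3:
  assumes sg: "simple_graph V E" and rs: "rotation_system V E \<rho>" and conn: "connected_graph V E"
    and x: "x \<in> V" "2 \<le> degree E x" and f: "f \<in> faces E \<rho>"
  shows "3 \<le> card f"
proof (rule ccontr)
  assume "\<not> 3 \<le> card f"
  moreover obtain d where d: "d \<in> darts E" "f = {(face_succ \<rho> ^^ k) d | k. True}"
    using f unfolding faces_def by blast
  ultimately have "face_succ \<rho> (face_succ \<rho> d) = d"
    using short_face_succ_involutive[OF sg rs] by simp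
  moreover obtain u v where uv: "d = (u, v)" by fastforce
  ultimately have "\<rho> v u = u" "\<rho> u v = v" by (auto simp: face_succ_def)
  moreover have "u \<in> V" "v \<in> V" using d(1) uv darts_subset[OF sg] by auto
  moreover have "v \<in> nbrs E u" "u \<in> nbrs E v"
    using d(1) uv by (simp_all add: in_darts_iff_nbrs nbrs_sym)
  ultimately have "nbrs E v = {u}" "nbrs E u = {v}"
    using rotation_fixpoint_imp_nbrs_singleton[OF rs] by blast+
  moreover have "x \<in> {u, v}"
    using connected_graph_single_edge[OF conn \<open>u \<in> V\<close>] calculation x(1) by blast
  ultimately have "degree E x = 1" by (auto simp: degree_def)
  with x(2) show False by simp
qed

lemma card_fst_fiber_le_1:
  assumes "finite Q" "card (fst ` Q) = card Q"
  shows "card (Q \<inter> {x} \<times> A) \<le> 1"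
proof -
  have "inj_on fst (Q \<inter> {x} \<times> A)"
    using eq_card_imp_inj_on[OF assms] by (rule inj_on_subset) blast
  then have "card (Q \<inter> {x} \<times> A) = card (fst ` (Q \<inter> {x} \<times> A))" by (rule card_image[symmetric])
  also have "\<dots> \<le> card {x}" by (rule card_mono) auto
  finally show ?thesis by simp
qed

text \<open>Summing face lengths gives \<open>2|E| \<ge> 2|V| + 3(|F| - 2)\<close>, which together with Euler's
  formula \<open>|F| = 2 - |V| + |E|\<close> forces \<open>|F| = 2\<close> and \<open>|E| = |V|\<close>.\<close>
lemma two_covering_faces:
  assumes sg: "simple_graph V E" and rs: "rotation_system V E \<rho>" and conn: "connected_graph V E"
    and x: "x \<in> V" "2 \<le> degree E x"
    and euler: "int (card V) - int (card E) + int (card (faces E \<rho>)) = 2"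
    and O1: "O1 \<in> faces E \<rho>" "fst ` O1 = V" and O2: "O2 \<in> faces E \<rho>" "fst ` O2 = V"
    and "O1 \<noteq> O2"
  shows "faces E \<rho> = {O1, O2}" "card O1 = card V" "card O2 = card V"
proof -
  let ?F = "faces E \<rho>" and ?R = "faces E \<rho> - {O1, O2}"
  have fin: "finite ?F" by (rule finite_faces[OF sg rs])
  have "card V \<le> card O1" "card V \<le> card O2"
    using card_image_le[OF finite_face[OF sg rs O1(1)], of fst]
      card_image_le[OF finite_face[OF sg rs O2(1)], of fst] O1(2) O2(2) by simp_all
  moreover have "3 * card ?R \<le> (\<Sum>f\<in>?R. card f)"
    using sum_bounded_below[of ?R 3 card] card_face_ge_3[OF sg rs conn x] by auto
  moreover have "(\<Sum>f\<in>?F. card f) = card O1 + card O2 + (\<Sum>f\<in>?R. card f)"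
  proof -
    have "O2 \<in> ?F - {O1}" "?F - {O1} - {O2} = ?R" using O2(1) \<open>O1 \<noteq> O2\<close> by auto
    then show ?thesis
      using sum.remove[OF fin O1(1), of card] sum.remove[of "?F - {O1}" O2 card] fin by simp
  qed
  moreover have "card ?R = card ?F - 2"
    using O1(1) O2(1) \<open>O1 \<noteq> O2\<close> fin by (simp add: card_Diff_subset)
  moreover have "2 \<le> card ?F"
    using O1(1) O2(1) \<open>O1 \<noteq> O2\<close> card_mono[OF fin, of "{O1, O2}"] by simp
  ultimately have "card ?R = 0" "card O1 = card V" "card O2 = card V"
    using sum_card_faces[OF sg rs] euler by linarith+
  then show "?F = {O1, O2}" "card O1 = card V" "card O2 = card V"
    using fin O1(1) O2(1) by auto
qed

lemma outer_face_unique: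
  assumes sg: "simple_graph V E" and conn: "connected_graph V E"
    and emb: "outerplanar_embedding V E \<rho> O1"
    and O2: "O2 \<in> faces E \<rho>" "fst ` O2 = V"
    and x: "x \<in> V" "3 \<le> degree E x"
  shows "O2 = O1"
proof (rule ccontr)
  assume "O2 \<noteq> O1"
  from emb have rs: "rotation_system V E \<rho>" and O1: "O1 \<in> faces E \<rho>" "fst ` O1 = V"
    and euler: "int (card V) - int (card E) + int (card (faces E \<rho>)) = 2"
    unfolding outerplanar_embedding_def plane_embedding_def by auto
  have x2: "2 \<le> degree E x" using x(2) by simp
  note covering = two_covering_faces[OF sg rs conn x(1) x2 euler O1 O2 \<open>O2 \<noteq> O1\<close>[symmetric]]
  let ?out = "{x} \<times> nbrs E x"
  have "?out \<subseteq> O1 \<union> O2"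
    using Union_faces[OF sg rs] covering(1) by (auto simp: in_darts_iff_nbrs)
  then have "?out = O1 \<inter> ?out \<union> O2 \<inter> ?out" by blast
  then have "card ?out \<le> card (O1 \<inter> ?out) + card (O2 \<inter> ?out)"
    by (metis card_Un_le)
  also have "\<dots> \<le> 2"
    using card_fst_fiber_le_1[OF finite_face[OF sg rs O1(1)], of x "nbrs E x"]
      card_fst_fiber_le_1[OF finite_face[OF sg rs O2(1)], of x "nbrs E x"]
      O1(2) O2(2) covering(2,3) by simp
  finally show False using x(2) by (simp add: degree_def card_cartesian_product_singleton)
qed

lemma consistent_extension_rotation:
  assumes ce: "consistent_extension V E \<rho> p q a b \<rho>' O'"
    and pV: "p \<in> V" and qV: "q \<in> V"
    and "p \<noteq> q" and new: "{p, q} \<notin> E" and a: "a \<in> nbrs E p" and b: "b \<in> nbrs E q"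
    and u: "u \<in> V" and v: "v \<in> nbrs (insert {p, q} E) u"
  shows "\<rho>' u v =
    (if (u, v) = (p, a) then q else if (u, v) = (p, q) then \<rho> p a
     else if (u, v) = (q, b) then p else if (u, v) = (q, p) then \<rho> q b else \<rho> u v)"
proof -
  let ?E = "insert {p, q} E"
  from ce have rs: "rotation_system V ?E \<rho>'" and pa: "\<rho>' p a = q" and qb: "\<rho>' q b = p"
    and restrict: "\<And>u v. u \<in> V \<Longrightarrow> v \<in> nbrs E u \<Longrightarrow>
      \<rho> u v = (if (u = p \<and> \<rho>' u v = q) \<or> (u = q \<and> \<rho>' u v = p) then \<rho>' u (\<rho>' u v) else \<rho>' u v)"
    unfolding consistent_extension_def outerplanar_embedding_def plane_embedding_def by auto
  have inj: "inj_on (\<rho>' w) (nbrs ?E w)" if "w \<in> V" for w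
    using rotation_system_bij[OF rs that] by (rule bij_betw_imp_inj_on)
  have "a \<noteq> q" "b \<noteq> p" using new a b by (auto simp: nbrs_def insert_commute)
  have "\<rho>' p q = \<rho> p a" using restrict[OF pV a] pa by simp
  moreover have "\<rho>' q p = \<rho> q b" using restrict[OF qV b] qb \<open>p \<noteq> q\<close> by simp
  moreover have "\<rho>' u v = \<rho> u v" if "v \<in> nbrs E u" "(u, v) \<noteq> (p, a)" "(u, v) \<noteq> (q, b)"
  proof -
    have "\<rho>' p v \<noteq> q" if "u = p"
      using inj_onD[OF inj[OF pV], of v a] pa \<open>(u, v) \<noteq> (p, a)\<close> \<open>v \<in> nbrs E u\<close> \<open>u = p\<close> a
      by (auto simp: nbrs_def)
    moreover have "\<rho>' q v \<noteq> p" if "u = q"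
      using inj_onD[OF inj[OF qV], of v b] qb \<open>(u, v) \<noteq> (q, b)\<close> \<open>v \<in> nbrs E u\<close> \<open>u = q\<close> b
      by (auto simp: nbrs_def)
    ultimately show ?thesis using restrict[OF u \<open>v \<in> nbrs E u\<close>] by auto
  qed
  moreover have "v \<in> nbrs E u \<or> (u, v) = (p, q) \<or> (u, v) = (q, p)"
    using v by (auto simp: nbrs_def doubleton_eq_iff)
  ultimately show ?thesis using pa qb \<open>p \<noteq> q\<close> \<open>a \<noteq> q\<close> \<open>b \<noteq> p\<close> by auto
qed

theorem lemma1:
  fixes V :: "'v set" and E :: "'v set set" and \<rho> :: "'v \<Rightarrow> 'v \<Rightarrow> 'v"
    and Oc :: "('v \<times> 'v) set" and p q a b :: 'v
  assumes "simple_graph V E"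
    and "connected_graph V E"
    and "outerplanar_embedding V E \<rho> Oc"
    and "p \<in> V" and "q \<in> V" and "p \<noteq> q" and "{p, q} \<notin> E"
    and "outerplanar V (insert {p, q} E)"
    and "a \<in> nbrs E p" and "b \<in> nbrs E q"
    and "degree E p > 1 \<or> degree E q > 1"
  shows "\<forall>\<rho>1 O1 \<rho>2 O2.
           consistent_extension V E \<rho> p q a b \<rho>1 O1 \<and>
           consistent_extension V E \<rho> p q a b \<rho>2 O2 \<longrightarrow>
           (\<forall>u\<in>V. \<forall>v\<in>nbrs (insert {p, q} E) u. \<rho>1 u v = \<rho>2 u v) \<and> O1 = O2"
proof (intro allI impI, elim conjE)
  fix \<rho>1 O1 \<rho>2 O2
  assume ce1: "consistent_extension V E \<rho> p q a b \<rho>1 O1"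
    and ce2: "consistent_extension V E \<rho> p q a b \<rho>2 O2"
  let ?E = "insert {p, q} E"
  have sg: "simple_graph V ?E" using assms(1,4-6) by (rule simple_graph_insert_edge)
  have conn: "connected_graph V ?E" using assms(2) by (rule connected_graph_mono) blast
  have emb1: "outerplanar_embedding V ?E \<rho>1 O1" and emb2: "outerplanar_embedding V ?E \<rho>2 O2"
    using ce1 ce2 by (simp_all add: consistent_extension_def)
  have agree: "\<forall>u\<in>V. \<forall>v\<in>nbrs ?E u. \<rho>1 u v = \<rho>2 u v"
    using consistent_extension_rotation[OF ce1 assms(4-7,9,10)]
      consistent_extension_rotation[OF ce2 assms(4-7,9,10)] by simp
  then have "faces ?E \<rho>2 = faces ?E \<rho>1"
    using emb1 emb2 faces_cong[OF sg]
    unfolding outerplanar_embedding_def plane_embedding_def by metis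
  then have "O2 \<in> faces ?E \<rho>1" "fst ` O2 = V"
    using emb2 unfolding outerplanar_embedding_def plane_embedding_def by auto
  moreover obtain x where "x \<in> V" "3 \<le> degree ?E x"
    using assms(1,4,5,7,11) degree_insert_edge[OF assms(1,7)] degree_insert_edge[of V E q p]
    by (fastforce simp: insert_commute)
  ultimately have "O2 = O1" using outer_face_unique[OF sg conn emb1] by blast
  with agree show "(\<forall>u\<in>V. \<forall>v\<in>nbrs ?E u. \<rho>1 u v = \<rho>2 u v) \<and> O1 = O2" by simp
qed

end
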